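(* With the areas $A(j,r)$ constructed below, for every $\langle j,r\rangle\in\Pi$ we have $A(j,r)\subseteq B(j,7\cdot 5^r)$.
   Context: $(V,d)$ is a metric space of diameter $W$, $F\subseteq V$ a finite set of facilities with opening costs $f_j>0$, $f_{\min}=\min_j f_j$, $B(x,\rho)=\{y\in V:d(x,y)\le\rho\}$. Let $\rho_{\min}=\lfloor\log_5 f_{\min}\rfloor$, $\rho_{\max}=\lceil\log_5 W\rceil$. For each integer $r\in[\rho_{\min},\rho_{\max}]$, let $J'_r=\{j\in F:f_j\le 5^r\}$ and let $J_r$ be a maximal subset of $J'_r$ such that any two facilities of $J_r$ are at distance greater than $5^{r+1}$. $\Pi=\{\langle j,r\rangle:\rho_{\min}\le r\le\rho_{\max},\ j\in J_r\}$. The tree $\mathcal{T}$ on $\Pi$ has as root the unique pair with $r=\rho_{\max}$, and for $r<\rho_{\max}$, $\mathrm{parent}(j,r)=\langle j',r+1\rangle$ where $j'$ is a facility of $J_{r+1}$ closest to $j$ (ties arbitrary). Areas: initialize $A(j,r)=\emptyset$ for all $\langle j,r\rangle\in\Pi$; for each point $p\in V$ lying in some ball $B(j,7\cdot 5^r)$ with $\langle j,r\rangle\in\Pi$, let $r^*$ be the minimum $r$ for which there is a pair $\langle j,r^*\rangle\in\Pi$ with $p\in B(j,7\cdot5^{r^*})$, let $\langle j^*,r^*\rangle$ be such a pair minimizing $d(p,j^* )$, and add $p$ to $A(j^*,r^* )$ and to $A(j',r')$ for every ancestor $\langle j',r'\rangle$ of $\langle j^*,r^*\rangle$ in $\mathcal{T}$.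 *)

theory Defs
  imports "HOL-Analysis.Analysis"
begin

text \<open>Closed ball B(x,rho) = {y in V. d x y <= rho} (V the carrier), via the
library's Metric_space.mcball.  Levels r are integers; 5^r is rendered as
5 powr r.\<close>

definition par_step :: "('a \<Rightarrow> int \<Rightarrow> 'a) \<Rightarrow> 'a \<times> int \<Rightarrow> 'a \<times> int" where
  "par_step P = (\<lambda>(j, r). (P j r, r + 1))"

end

theory Submission
  imports Defs
begin

text \<open>A facility j of level r lies in J'_(r+1), so by maximality of J_(r+1) some facility of
J_(r+1) is within 5^(r+2) of j; hence each parent step moves by at most 25 * 5^r.  Following
the parents from the pair to which a point p was first assigned (at distance at most
7 * 5^(r*)), the distances add up geometrically to at most 25/4 * 5^r + 3/4 * 5^(r*), which is
at most 7 * 5^r at every ancestor of level r.\<close>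

lemma (in Metric_space) maximal_separated_dense:
  assumes "J \<subseteq> S" "S \<subseteq> M" "j \<in> S" "0 \<le> \<delta>"
    and separated: "\<forall>a\<in>J. \<forall>b\<in>J. a \<noteq> b \<longrightarrow> \<delta> < d a b"
    and maximal: "\<And>T. J \<subseteq> T \<Longrightarrow> T \<subseteq> S \<Longrightarrow> \<forall>a\<in>T. \<forall>b\<in>T. a \<noteq> b \<longrightarrow> \<delta> < d a b \<Longrightarrow> T = J"
  shows "\<exists>j'\<in>J. d j j' \<le> \<delta>"
proof (cases "j \<in> J")
  case True
  then show ?thesis using assms zero[of j j] by force
next
  case False
  have "\<not> (\<forall>a\<in>insert j J. \<forall>b\<in>insert j J. a \<noteq> b \<longrightarrow> \<delta> < d a b)"
  proof
    assume "\<forall>a\<in>insert j J. \<forall>b\<in>insert j J. a \<noteq> b \<longrightarrow> \<delta> < d a b"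
    then have "insert j J = J" using assms(1,3) by (intro maximal) auto
    with False show False by blast
  qed
  then obtain a b where ab: "a \<in> insert j J" "b \<in> insert j J" "a \<noteq> b" "d a b \<le> \<delta>"
    by (meson not_less)
  then show ?thesis using separated commute[of a b] by (metis insertE not_less)
qed

lemma (in Metric_space) dist_closest_le_of_maximal_separated:
  assumes "J \<subseteq> S" "S \<subseteq> M" "j \<in> S" "0 \<le> \<delta>"
    and "\<forall>a\<in>J. \<forall>b\<in>J. a \<noteq> b \<longrightarrow> \<delta> < d a b"
    and "\<And>T. J \<subseteq> T \<Longrightarrow> T \<subseteq> S \<Longrightarrow> \<forall>a\<in>T. \<forall>b\<in>T. a \<noteq> b \<longrightarrow> \<delta> < d a b \<Longrightarrow> T = J"
    and closest: "\<And>j'. j' \<in> J \<Longrightarrow> d j c \<le> d j j'"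
  shows "d j c \<le> \<delta>"
proof -
  obtain j' where "j' \<in> J" "d j j' \<le> \<delta>"
    using maximal_separated_dense[OF assms(1-6)] by blast
  then show ?thesis using closest[of j'] by linarith
qed

lemma snd_funpow_par_step: "snd ((par_step P ^^ k) x) = snd x + int k"
  by (induction k) (auto simp: par_step_def split: prod.splits)

lemma funpow_par_step_mem:
  assumes closed: "\<And>j r. (j, r) \<in> T \<Longrightarrow> r < rmax \<Longrightarrow> (P j r, r + 1) \<in> T"
    and "x \<in> T" "snd x + int k \<le> rmax"
  shows "(par_step P ^^ k) x \<in> T"
  using assms(3)
proof (induction k)
  case 0
  then show ?case using \<open>x \<in> T\<close> by simp
next
  case (Suc k)
  obtain j r where jr: "(par_step P ^^ k) x = (j, r)" by fastforce
  then have "r = snd x + int k" using snd_funpow_par_step[where P = P and k = k and x = x] by simp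
  then show ?case using Suc jr closed by (simp add: par_step_def)
qed

lemma (in Metric_space) dist_le_of_geometric_chain:
  fixes x :: "nat \<Rightarrow> 'a" and r0 :: int
  assumes in_M: "\<And>i. i \<le> n \<Longrightarrow> x i \<in> M" and "p \<in> M"
    and start: "d (x 0) p \<le> 7 * 5 powr r0"
    and steps: "\<And>i. i < n \<Longrightarrow> d (x i) (x (Suc i)) \<le> 25 * 5 powr (r0 + int i)"
  shows "d (x n) p \<le> 7 * 5 powr (r0 + int n)"
proof -
  \<comment> \<open>25 * (5^r0 + ... + 5^(r0+m-1)) = 25/4 * (5^(r0+m) - 5^r0)\<close>
  have bound: "d (x m) p \<le> 25/4 * 5 powr (r0 + int m) + 3/4 * 5 powr r0" if "m \<le> n" for m
    using that
  proof (induction m)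
    case 0
    then show ?case using start by simp
  next
    case (Suc m)
    have "d (x (Suc m)) p \<le> d (x (Suc m)) (x m) + d (x m) p"
      using Suc.prems in_M \<open>p \<in> M\<close> by (intro triangle) auto
    moreover have "d (x (Suc m)) (x m) \<le> 25 * 5 powr (r0 + int m)"
      using steps[of m] Suc.prems commute by simp
    moreover have "5 powr (r0 + int (Suc m)) = 5 * 5 powr (r0 + int m)"
      by (simp add: powr_add)
    ultimately show ?case using Suc by simp
  qed
  have "5 powr r0 \<le> 5 powr (r0 + int n)" by simp
  then show ?thesis using bound[OF order_refl] by linarith
qed

lemma (in Metric_space) dist_funpow_par_step_le:
  assumes closed: "\<And>j r. (j, r) \<in> T \<Longrightarrow> r < rmax \<Longrightarrow> (P j r, r + 1) \<in> T"
    and step: "\<And>j r. (j, r) \<in> T \<Longrightarrow> r < rmax \<Longrightarrow> d j (P j r) \<le> 25 * 5 powr r"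
    and T_M: "\<And>j r. (j, r) \<in> T \<Longrightarrow> j \<in> M"
    and start: "(j0, r0) \<in> T" "p \<in> M" "d j0 p \<le> 7 * 5 powr r0"
    and "r \<le> rmax" and k: "(par_step P ^^ k) (j0, r0) = (j, r)"
  shows "d j p \<le> 7 * 5 powr r"
proof -
  define x where "x i = (par_step P ^^ i) (j0, r0)" for i
  have level: "snd (x i) = r0 + int i" for i
    unfolding x_def by (simp add: snd_funpow_par_step)
  have r_eq: "r = r0 + int k" using level[of k] k x_def by simp
  have x_T: "x i \<in> T" if "i \<le> k" for i
    unfolding x_def using that \<open>r \<le> rmax\<close> r_eq start(1)
    by (intro funpow_par_step_mem[of T rmax P]) (auto intro: closed)
  have x_Suc: "x (Suc i) = (P (fst (x i)) (r0 + int i), r0 + int i + 1)" for i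
    using level[of i] by (cases "x i") (simp add: x_def par_step_def)
  have "d (fst (x k)) p \<le> 7 * 5 powr (r0 + int k)"
  proof (rule dist_le_of_geometric_chain)
    show "fst (x i) \<in> M" if "i \<le> k" for i
      using x_T[OF that] T_M by (cases "x i") auto
    show "p \<in> M" "d (fst (x 0)) p \<le> 7 * 5 powr r0"
      using start by (auto simp: x_def)
    show "d (fst (x i)) (fst (x (Suc i))) \<le> 25 * 5 powr (r0 + int i)" if "i < k" for i
      using x_T[of i] level[of i] step[of "fst (x i)" "r0 + int i"] that r_eq \<open>r \<le> rmax\<close>
      by (cases "x i") (simp add: x_Suc)
  qed
  then show ?thesis using k r_eq by (simp add: x_def)
qed

theorem lemma5:
  fixes V :: "'a set" and d :: "'a \<Rightarrow> 'a \<Rightarrow> real"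
    and F :: "'a set" and f :: "'a \<Rightarrow> real"
    and J :: "int \<Rightarrow> 'a set"
    and P :: "'a \<Rightarrow> int \<Rightarrow> 'a"
    and sel :: "'a \<Rightarrow> 'a"
    and W :: real and fmin :: real and rmin rmax :: int
    and Pi :: "('a \<times> int) set"
    and covered :: "'a \<Rightarrow> bool" and rstar :: "'a \<Rightarrow> int"
    and A :: "'a \<Rightarrow> int \<Rightarrow> 'a set"
  assumes metric: "Metric_space V d"
    and bounded: "Metric_space.mbounded V d V"
    and W_def: "W = Sup {d x y | x y. x \<in> V \<and> y \<in> V}"
    and F_sub: "F \<subseteq> V" and F_fin: "finite F" and F_ne: "F \<noteq> {}"
    and f_pos: "\<And>j. j \<in> F \<Longrightarrow> f j > 0"
    and fmin_def: "fmin = Min (f ` F)"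
    and rmin_def: "rmin = \<lfloor>log 5 fmin\<rfloor>"
    and rmax_def: "rmax = \<lceil>log 5 W\<rceil>"
    \<comment> \<open>J r is a maximal 5^(r+1)-separated subset of J'_r = {j in F. f j <= 5^r}\<close>
    and J_sub: "\<And>r. rmin \<le> r \<Longrightarrow> r \<le> rmax \<Longrightarrow> J r \<subseteq> {j \<in> F. f j \<le> 5 powr r}"
    and J_sep: "\<And>r j j'. rmin \<le> r \<Longrightarrow> r \<le> rmax \<Longrightarrow> j \<in> J r \<Longrightarrow> j' \<in> J r \<Longrightarrow> j \<noteq> j'
                  \<Longrightarrow> d j j' > 5 powr (r + 1)"
    and J_max: "\<And>r S. rmin \<le> r \<Longrightarrow> r \<le> rmax \<Longrightarrow> J r \<subseteq> S \<Longrightarrow> S \<subseteq> {j \<in> F. f j \<le> 5 powr r}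
                  \<Longrightarrow> (\<forall>j\<in>S. \<forall>j'\<in>S. j \<noteq> j' \<longrightarrow> d j j' > 5 powr (r + 1)) \<Longrightarrow> S = J r"
    and Pi_def: "Pi = {(j, r). rmin \<le> r \<and> r \<le> rmax \<and> j \<in> J r}"
    \<comment> \<open>parent of (j,r), r < rmax, is (P j r, r+1) with P j r a closest facility of J (r+1)\<close>
    and P_in: "\<And>j r. (j, r) \<in> Pi \<Longrightarrow> r < rmax \<Longrightarrow> P j r \<in> J (r + 1)"
    and P_closest: "\<And>j r j'. (j, r) \<in> Pi \<Longrightarrow> r < rmax \<Longrightarrow> j' \<in> J (r + 1)
                  \<Longrightarrow> d j (P j r) \<le> d j j'"
    \<comment> \<open>assignment of points\<close>
    and covered_def: "covered = (\<lambda>p. p \<in> V \<and>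
                  (\<exists>(j, r) \<in> Pi. p \<in> Metric_space.mcball V d j (7 * 5 powr r)))"
    and rstar_def: "rstar = (\<lambda>p. Min {r. \<exists>j. (j, r) \<in> Pi \<and> p \<in> Metric_space.mcball V d j (7 * 5 powr r)})"
    and sel_in: "\<And>p. covered p \<Longrightarrow> (sel p, rstar p) \<in> Pi
                  \<and> p \<in> Metric_space.mcball V d (sel p) (7 * 5 powr (rstar p))"
    and sel_min: "\<And>p j. covered p \<Longrightarrow> (j, rstar p) \<in> Pi
                  \<Longrightarrow> p \<in> Metric_space.mcball V d j (7 * 5 powr (rstar p)) \<Longrightarrow> d p (sel p) \<le> d p j"
    \<comment> \<open>p is added to A(sel p, rstar p) and to all its ancestors in the tree\<close>
    and A_def: "A = (\<lambda>j r. {p. covered p \<and> r \<le> rmax \<and>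
                  (\<exists>k::nat. (par_step P ^^ k) (sel p, rstar p) = (j, r))})"
  shows "\<forall>(j, r) \<in> Pi. A j r \<subseteq> Metric_space.mcball V d j (7 * 5 powr r)"
proof -
  interpret Metric_space V d by (rule metric)
  have Pi_V: "j \<in> V" if "(j, r) \<in> Pi" for j r
    using that J_sub F_sub unfolding Pi_def by blast
  have parent_mem: "(P j r, r + 1) \<in> Pi" if "(j, r) \<in> Pi" "r < rmax" for j r
    using that P_in unfolding Pi_def by auto
  have parent_dist: "d j (P j r) \<le> 25 * 5 powr r" if jr: "(j, r) \<in> Pi" and "r < rmax" for j r
  proof -
    have r1: "rmin \<le> r + 1" "r + 1 \<le> rmax" using that unfolding Pi_def by auto
    let ?S = "{j \<in> F. f j \<le> 5 powr (r + 1)}" and ?\<delta> = "5 powr (real_of_int (r + 1) + 1)"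
    have "j \<in> ?S"
      using jr J_sub order_trans[of "f j" "5 powr r" "5 powr (r + 1)"] unfolding Pi_def by auto
    moreover have "?S \<subseteq> V" using F_sub by auto
    moreover have "\<forall>a\<in>J (r + 1). \<forall>b\<in>J (r + 1). a \<noteq> b \<longrightarrow> ?\<delta> < d a b"
      using J_sep[OF r1] by blast
    ultimately have "d j (P j r) \<le> ?\<delta>"
      using dist_closest_le_of_maximal_separated[OF J_sub[OF r1] _ _ _ _ J_max[OF r1] P_closest[OF that]]
      by simp
    then show ?thesis by (simp add: powr_add)
  qed
  show ?thesis
  proof clarify
    fix j r p
    assume "(j, r) \<in> Pi" and "p \<in> A j r"
    then obtain k where cov: "covered p" and "r \<le> rmax"
      and k: "(par_step P ^^ k) (sel p, rstar p) = (j, r)" using A_def by auto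
    have start: "(sel p, rstar p) \<in> Pi" "p \<in> V" "d (sel p) p \<le> 7 * 5 powr rstar p"
      using sel_in[OF cov] by auto
    from parent_mem parent_dist Pi_V start \<open>r \<le> rmax\<close> k have "d j p \<le> 7 * 5 powr r"
      by (rule dist_funpow_par_step_le)
    then show "p \<in> mcball j (7 * 5 powr r)"
      using Pi_V[OF \<open>(j, r) \<in> Pi\<close>] sel_in[OF cov] by simp
  qed
qed

end
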